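(* For odd $k\ge3$, let $G_k$ be the join of $k$ pairwise disjoint copies of the edgeless graph on three vertices (so $G_k$ has $3k$ vertices, and two vertices are adjacent iff they lie in different copies). Then $G_k$ is not chordal, $\alpha(G_k)=3$, and $\sum_{I\in\mathscr{C}(G_k)}(-1)^{|I|-1}=1+2^k$. Consequently, for events with $\Pr(A_v)=1$ for all vertices $v$ of $G_k$, the inequality $\Pr(\bigcup_v A_v)\ge\frac{1}{\alpha(G_k)}\sum_{I\in\mathscr{C}(G_k)}(-1)^{|I|-1}\Pr(\bigcap_{i\in I}A_i)$ fails.
   Context: A graph is chordal if it contains no cycle of length four or more as an induced subgraph. $\mathscr{C}(G)$ denotes the clique complex of $G$: the set of all non-empty subsets of vertices that are pairwise adjacent. $\alpha(G)$ denotes the independence number of $G$. *)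

theory Defs
  imports "HOL-Probability.Probability"
begin

text \<open>Simple graphs are given by a vertex set V and a symmetric irreflexive
adjacency relation E.\<close>

definition induced_cycle :: "'v set \<Rightarrow> ('v \<Rightarrow> 'v \<Rightarrow> bool) \<Rightarrow> 'v list \<Rightarrow> bool" where
  "induced_cycle V E cs \<longleftrightarrow>
     length cs \<ge> 4 \<and> distinct cs \<and> set cs \<subseteq> V \<and>
     (\<forall>i < length cs. \<forall>j < length cs.
        E (cs ! i) (cs ! j) \<longleftrightarrow> (j = Suc i mod length cs \<or> i = Suc j mod length cs))"

definition chordal :: "'v set \<Rightarrow> ('v \<Rightarrow> 'v \<Rightarrow> bool) \<Rightarrow> bool" where
  "chordal V E \<longleftrightarrow> \<not> (\<exists>cs. induced_cycle V E cs)"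

definition clique_complex :: "'v set \<Rightarrow> ('v \<Rightarrow> 'v \<Rightarrow> bool) \<Rightarrow> 'v set set" where
  "clique_complex V E = {I. I \<noteq> {} \<and> I \<subseteq> V \<and> (\<forall>u\<in>I. \<forall>v\<in>I. u \<noteq> v \<longrightarrow> E u v)}"

definition independent_set :: "'v set \<Rightarrow> ('v \<Rightarrow> 'v \<Rightarrow> bool) \<Rightarrow> 'v set \<Rightarrow> bool" where
  "independent_set V E S \<longleftrightarrow> S \<subseteq> V \<and> (\<forall>u\<in>S. \<forall>v\<in>S. \<not> E u v)"

definition independence_number :: "'v set \<Rightarrow> ('v \<Rightarrow> 'v \<Rightarrow> bool) \<Rightarrow> nat" where
  "independence_number V E = Max {card S | S. independent_set V E S}"

text \<open>G_k: the join of k disjoint copies of the edgeless graph on three vertices.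
Vertex (i,j) is vertex j of copy i; vertices are adjacent iff in different copies.\<close>
definition Gk_V :: "nat \<Rightarrow> (nat \<times> nat) set" where
  "Gk_V k = {0..<k} \<times> {0..<3}"

definition Gk_E :: "nat \<times> nat \<Rightarrow> nat \<times> nat \<Rightarrow> bool" where
  "Gk_E u v \<longleftrightarrow> fst u \<noteq> fst v"

end

theory Submission
  imports Defs
begin

text \<open>
  Proof idea.  \<open>G\<^sub>k\<close> is the complete multipartite graph with \<open>k\<close> parts of size 3.  We work
  with parts of arbitrary size \<open>m\<close>: vertices \<open>(i, j)\<close> with \<open>i < k\<close>, \<open>j < m\<close>, adjacent iff their
  first components differ.
  \<^item> Two parts already span an induced 4-cycle, so the graph is not chordal once \<open>k \<ge> 2\<close>.
  \<^item> An independent set lies inside a single part, so \<open>\<alpha> = m\<close> once \<open>k \<ge> 1\<close>.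
  \<^item> Cliques together with the empty set are the partial transversals of the parts, i.e. the
    sets on which \<open>fst\<close> is injective.  Adding the part \<open>k\<close> either leaves a transversal alone
    or adds one of \<open>m\<close> new vertices, so \<open>\<Sum>(-1)^|I| = (1 - m)^k\<close> by induction, and the clique
    complex sum is \<open>1 - (1 - m)^k\<close>, which is \<open>1 + 2^k\<close> for \<open>m = 3\<close> and odd \<open>k\<close>.
  \<^item> For events of probability 1 every finite nonempty intersection has probability 1, so
    the probabilistic clique sum collapses to the combinatorial one, giving a right-hand side
    \<open>(1 + 2^k)/3 > 1\<close> for \<open>k \<ge> 3\<close>, while the union has probability at most 1.
\<close>

definition multipartite_V :: "nat \<Rightarrow> nat \<Rightarrow> (nat \<times> nat) set" where
  "multipartite_V k m = {0..<k} \<times> {0..<m}"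

lemma Gk_V_multipartite: "Gk_V k = multipartite_V k 3"
  by (simp add: Gk_V_def multipartite_V_def)

lemma finite_multipartite_V [simp]: "finite (multipartite_V k m)"
  by (simp add: multipartite_V_def)

lemma multipartite_not_chordal:
  assumes "k \<ge> 2" and "m \<ge> 2"
  shows "\<not> chordal (multipartite_V k m) Gk_E"
proof -
  have "induced_cycle (multipartite_V k m) Gk_E [(0, 0), (1, 0), (0, 1), (1, 1)]"
    unfolding induced_cycle_def using assms
    by (simp add: All_less_Suc2 multipartite_V_def Gk_E_def)
  then show ?thesis by (auto simp: chordal_def)
qed

lemma independent_subset_part:
  assumes "independent_set (multipartite_V k m) Gk_E S" and "u \<in> S"
  shows "S \<subseteq> {fst u} \<times> {0..<m}"
proof
  fix v assume "v \<in> S"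
  then have "fst v = fst u"
    using assms unfolding independent_set_def Gk_E_def by blast
  moreover have "snd v < m"
    using assms \<open>v \<in> S\<close> unfolding independent_set_def multipartite_V_def by auto
  ultimately show "v \<in> {fst u} \<times> {0..<m}" by (cases v) auto
qed

lemma independent_card_le:
  assumes "independent_set (multipartite_V k m) Gk_E S"
  shows "card S \<le> m"
proof (cases "S = {}")
  case False
  then obtain u where "u \<in> S" by auto
  then have "card S \<le> card ({fst u} \<times> {0..<m})"
    using independent_subset_part[OF assms] by (intro card_mono) auto
  then show ?thesis by simp
qed simp

lemma multipartite_independence_number:
  assumes "k \<ge> 1"
  shows "independence_number (multipartite_V k m) Gk_E = m"
proof -
  let ?cards = "{card S | S. independent_set (multipartite_V k m) Gk_E S}"
  have "independent_set (multipartite_V k m) Gk_E ({0} \<times> {0..<m})"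
    using assms by (auto simp: independent_set_def multipartite_V_def Gk_E_def)
  then have "m \<in> ?cards" by force
  moreover have "?cards \<subseteq> {..m}" using independent_card_le by auto
  ultimately show ?thesis unfolding independence_number_def
    by (intro Max_eqI) (auto intro: finite_subset)
qed

definition transversals :: "nat \<Rightarrow> nat \<Rightarrow> (nat \<times> nat) set set" where
  "transversals k m = {I. I \<subseteq> multipartite_V k m \<and> inj_on fst I}"

lemma finite_transversals: "finite (transversals k m)"
  by (rule finite_subset[of _ "Pow (multipartite_V k m)"]) (auto simp: transversals_def)

lemma transversal_finite: "I \<in> transversals k m \<Longrightarrow> finite I"
  unfolding transversals_def by (auto intro: finite_subset[OF _ finite_multipartite_V])

lemma clique_complex_multipartite:
  "clique_complex (multipartite_V k m) Gk_E = transversals k m - {{}}"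
  by (auto simp: clique_complex_def transversals_def Gk_E_def inj_on_def)

lemma new_vertex_notin_transversal: "I \<in> transversals k m \<Longrightarrow> (k, j) \<notin> I"
  by (auto simp: transversals_def multipartite_V_def)

lemma transversals_Suc:
  "transversals (Suc k) m = transversals k m \<union> (\<Union>j<m. insert (k, j) ` transversals k m)"
proof (intro equalityI subsetI)
  fix I assume I: "I \<in> transversals (Suc k) m"
  show "I \<in> transversals k m \<union> (\<Union>j<m. insert (k, j) ` transversals k m)"
  proof (cases "\<exists>j. (k, j) \<in> I")
    case False
    then have "I \<in> transversals k m"
      using I by (force simp: transversals_def multipartite_V_def less_Suc_eq)
    then show ?thesis by blast
  next
    case True
    then obtain j where j: "(k, j) \<in> I" by auto
    then have "j < m" using I by (auto simp: transversals_def multipartite_V_def)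
    have "fst v \<noteq> k" if "v \<in> I" and "v \<noteq> (k, j)" for v
      using I j that by (auto simp: transversals_def inj_on_def)
    then have "I - {(k, j)} \<in> transversals k m"
      using I by (force simp: transversals_def multipartite_V_def less_Suc_eq inj_on_def)
    moreover have "I = insert (k, j) (I - {(k, j)})" using j by auto
    ultimately show ?thesis using \<open>j < m\<close> by blast
  qed
next
  fix I assume "I \<in> transversals k m \<union> (\<Union>j<m. insert (k, j) ` transversals k m)"
  then show "I \<in> transversals (Suc k) m"
    by (force simp: transversals_def multipartite_V_def)
qed

lemma transversals_alternating_sum:
  "(\<Sum>I\<in>transversals k m. (-1::int) ^ card I) = (1 - int m) ^ k"
proof (induction k)
  case 0
  have "transversals 0 m = {{}}" by (auto simp: transversals_def multipartite_V_def)
  then show ?case by simp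
next
  case (Suc k)
  let ?T = "transversals k m" and ?f = "\<lambda>I. (-1::int) ^ card I"
  note fresh = new_vertex_notin_transversal
  have inj: "inj_on (insert (k, j)) ?T" for j
    by (rule inj_onI) (metis fresh insert_ident)
  text \<open>Adding a fresh vertex flips the sign of every term.\<close>
  have extend: "sum ?f (insert (k, j) ` ?T) = - sum ?f ?T" for j
    by (simp add: sum.reindex[OF inj] fresh transversal_finite sum_negf)
  have "sum ?f (\<Union>j<m. insert (k, j) ` ?T) = (\<Sum>j<m. sum ?f (insert (k, j) ` ?T))"
    by (rule sum.UNION_disjoint) (auto simp: finite_transversals dest: fresh)
  then have "sum ?f (transversals (Suc k) m) = sum ?f ?T + int m * (- sum ?f ?T)"
    unfolding transversals_Suc
    by (subst sum.union_disjoint) (auto simp: finite_transversals extend dest: fresh)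
  then show ?case using Suc by (simp add: algebra_simps)
qed

lemma multipartite_clique_sum:
  "(\<Sum>I\<in>clique_complex (multipartite_V k m) Gk_E. (-1::int) ^ (card I - 1)) = 1 - (1 - int m) ^ k"
proof -
  let ?T = "transversals k m"
  have sign: "(-1::int) ^ (card I - 1) = - ((-1) ^ card I)" if "I \<in> ?T - {{}}" for I
    using that transversal_finite by (cases "card I") auto
  have "{} \<in> ?T" by (simp add: transversals_def)
  have "(\<Sum>I\<in>?T - {{}}. (-1::int) ^ (card I - 1)) = (\<Sum>I\<in>?T - {{}}. - ((-1) ^ card I))"
    by (rule sum.cong[OF refl sign])
  also have "\<dots> = - ((\<Sum>I\<in>?T. (-1) ^ card I) - 1)"
    using \<open>{} \<in> ?T\<close> by (simp add: sum.remove[OF finite_transversals] sum_negf)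
  finally show ?thesis
    by (simp add: clique_complex_multipartite transversals_alternating_sum)
qed

lemma (in prob_space) prob_INT_eq_1:
  assumes "finite I" and "I \<noteq> {}" and "\<And>i. i \<in> I \<Longrightarrow> A i \<in> events \<and> prob (A i) = 1"
  shows "prob (\<Inter>i\<in>I. A i) = 1"
proof -
  have "AE x in M. \<forall>i\<in>I. x \<in> A i"
    using assms by (intro AE_finite_allI AE_prob_1) auto
  moreover have "(\<Inter>i\<in>I. A i) \<in> events" using assms by (intro sets.finite_INT) auto
  ultimately show ?thesis by (subst prob_eq_1) auto
qed

lemma (in prob_space) clique_sum_prob_1:
  assumes "finite V" and "\<forall>v\<in>V. A v \<in> events \<and> prob (A v) = 1"
  shows "(\<Sum>I\<in>clique_complex V E. (-1::real) ^ (card I - 1) * prob (\<Inter>i\<in>I. A i))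
       = real_of_int (\<Sum>I\<in>clique_complex V E. (-1::int) ^ (card I - 1))"
proof -
  have "prob (\<Inter>i\<in>I. A i) = 1" if "I \<in> clique_complex V E" for I
    using that assms by (intro prob_INT_eq_1) (auto simp: clique_complex_def intro: finite_subset)
  then show ?thesis by simp
qed

theorem mainTheorem11:
  fixes k :: nat
  assumes "odd k" and "k \<ge> 3"
  shows "\<not> chordal (Gk_V k) Gk_E
    \<and> independence_number (Gk_V k) Gk_E = 3
    \<and> (\<Sum>I\<in>clique_complex (Gk_V k) Gk_E. (-1::int) ^ (card I - 1)) = 1 + 2 ^ k
    \<and> (\<forall>(M :: 'a measure) (A :: nat \<times> nat \<Rightarrow> 'a set).
          prob_space M \<and> (\<forall>v\<in>Gk_V k. A v \<in> sets M \<and> measure M (A v) = 1) \<longrightarrow>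
          \<not> (measure M (\<Union>v\<in>Gk_V k. A v) \<ge>
               1 / real (independence_number (Gk_V k) Gk_E) *
               (\<Sum>I\<in>clique_complex (Gk_V k) Gk_E.
                  (-1::real) ^ (card I - 1) * measure M (\<Inter>i\<in>I. A i))))"
proof -
  have alpha: "independence_number (Gk_V k) Gk_E = 3"
    using assms by (simp add: Gk_V_multipartite multipartite_independence_number)
  have sum: "(\<Sum>I\<in>clique_complex (Gk_V k) Gk_E. (-1::int) ^ (card I - 1)) = 1 + 2 ^ k"
    using assms(1) unfolding Gk_V_multipartite multipartite_clique_sum by simp
  have "(2::real) ^ 3 \<le> 2 ^ k" using assms(2) by (intro power_increasing) auto
  then have big: "1 < 1 / real (3::nat) * (1 + (2::real) ^ k)" by simp
  have "\<not> measure M (\<Union>v\<in>Gk_V k. A v) \<ge> 1 / real (independence_number (Gk_V k) Gk_E) *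
          (\<Sum>I\<in>clique_complex (Gk_V k) Gk_E. (-1::real) ^ (card I - 1) * measure M (\<Inter>i\<in>I. A i))"
    if "prob_space M" and A: "\<forall>v\<in>Gk_V k. A v \<in> sets M \<and> measure M (A v) = 1"
    for M :: "'a measure" and A
  proof -
    interpret prob_space M by fact
    have "(\<Sum>I\<in>clique_complex (Gk_V k) Gk_E. (-1::real) ^ (card I - 1) * prob (\<Inter>i\<in>I. A i))
        = real_of_int (\<Sum>I\<in>clique_complex (Gk_V k) Gk_E. (-1::int) ^ (card I - 1))"
      using A by (intro clique_sum_prob_1) (auto simp: Gk_V_def)
    also have "\<dots> = 1 + 2 ^ k" unfolding sum by simp
    finally have rhs: "(\<Sum>I\<in>clique_complex (Gk_V k) Gk_E.
        (-1::real) ^ (card I - 1) * prob (\<Inter>i\<in>I. A i)) = 1 + 2 ^ k" .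
    show ?thesis
      unfolding alpha rhs using big prob_le_1[of "\<Union>v\<in>Gk_V k. A v"] by linarith
  qed
  then show ?thesis
    using assms alpha sum by (simp add: Gk_V_multipartite multipartite_not_chordal)
qed

end
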